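(* The zero-error capacity of a finite-state erasure channel with topological entropy $h_{ch}$ and maximal ratio $\tau$ satisfies $1-\tau-h_{ch}\le C_0\le 1-\tau$.
   Context: Logarithms are to base $q=|\mathcal{X}|\ge2$, $\mathcal{X}$ the finite input alphabet. Finite-state erasure channel: a strongly connected directed graph $\mathscr{G}=(\mathcal{S},\mathcal{E})$ with finite vertex set $\mathcal{S}$ and $\mathcal{E}\subseteq\mathcal{S}\times\mathcal{S}$, each edge labelled $\ell(e)\in\{0,1\}$, distinct edges leaving the same state having distinct labels. A noise word $v(0:n-1)$ is admissible from initial state $s_0$ if it is the label sequence of a walk of length $n$ starting at $s_0$; output $y(t)=x(t)$ if $v(t)=0$ and $y(t)=*$ (a symbol not in $\mathcal{X}$) if $v(t)=1$. The initial state is arbitrary and unknown. A zero-error code of length $n$ is a set $\mathcal{F}\subseteq\mathcal{X}^n$ such that no output word can be produced (for any initial states and admissible noise) by two distinct codewords; $C_0=\sup_n\sup_{\mathcal{F}}\log|\mathcal{F}|/n$. The adjacency matrix $\mathcal{A}$ has $\mathcal{A}_{s,s'}=1$ iff $(s,s')\in\mathcal{E}$, $\lambda$ is its Perron eigenvalue, $h_{ch}=\log\lambda$. The maximal ratio is $\tau=\max_i e_i/l_i$ over directed simple cycles ($e_i$ = number of edges labelled 1, $l_i$ = length). *)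

theory Defs
  imports "HOL-Analysis.Analysis"
begin

text \<open>Finite-state erasure channel. States: the finite type 's (vertex set = UNIV).
  Edges: E. Labels: lab e (True = label 1 = erasure, False = label 0).\<close>

definition strongly_connected :: "('s \<times> 's) set \<Rightarrow> bool" where
  "strongly_connected E \<longleftrightarrow> (\<forall>s s'. (s, s') \<in> E\<^sup>*)"

definition fsec :: "('s::finite \<times> 's) set \<Rightarrow> ('s \<times> 's \<Rightarrow> bool) \<Rightarrow> bool" where
  "fsec E lab \<longleftrightarrow> E \<noteq> {} \<and> strongly_connected E \<and>
     (\<forall>s a b. (s, a) \<in> E \<longrightarrow> (s, b) \<in> E \<longrightarrow> lab (s, a) = lab (s, b) \<longrightarrow> a = b)"

definition admissible_from ::
  "('s \<times> 's) set \<Rightarrow> ('s \<times> 's \<Rightarrow> bool) \<Rightarrow> 's \<Rightarrow> bool list \<Rightarrow> bool" where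
  "admissible_from E lab s0 vs \<longleftrightarrow>
     (\<exists>ss. length ss = Suc (length vs) \<and> ss ! 0 = s0 \<and>
        (\<forall>t < length vs. (ss ! t, ss ! Suc t) \<in> E \<and> vs ! t = lab (ss ! t, ss ! Suc t)))"

text \<open>Channel output; None plays the role of the erasure symbol *.\<close>
definition channel_out :: "'x list \<Rightarrow> bool list \<Rightarrow> 'x option list" where
  "channel_out xs vs = map2 (\<lambda>x v. if v then None else Some x) xs vs"

definition zero_error_code ::
  "('s \<times> 's) set \<Rightarrow> ('s \<times> 's \<Rightarrow> bool) \<Rightarrow> nat \<Rightarrow> 'x list set \<Rightarrow> bool" where
  "zero_error_code E lab n F \<longleftrightarrow>
     (\<forall>x \<in> F. length x = n) \<and>
     (\<forall>x1 \<in> F. \<forall>x2 \<in> F. x1 \<noteq> x2 \<longrightarrow>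
        \<not> (\<exists>s1 s2 v1 v2. length v1 = n \<and> length v2 = n \<and>
              admissible_from E lab s1 v1 \<and> admissible_from E lab s2 v2 \<and>
              channel_out x1 v1 = channel_out x2 v2))"

definition zero_error_capacity ::
  "('s \<times> 's) set \<Rightarrow> ('s \<times> 's \<Rightarrow> bool) \<Rightarrow> 'x::finite itself \<Rightarrow> real" where
  "zero_error_capacity E lab _ =
     Sup {log (real CARD('x)) (real (card F)) / real n | n (F :: 'x list set).
            n \<ge> 1 \<and> F \<noteq> {} \<and> zero_error_code E lab n F}"

definition adj_matrix :: "('s::finite \<times> 's) set \<Rightarrow> real^'s^'s" where
  "adj_matrix E = (\<chi> i j. if (i, j) \<in> E then 1 else 0)"

text \<open>Perron eigenvalue = spectral radius of the (nonnegative, irreducible) matrix.\<close>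
definition perron_eigenvalue :: "real^'n::finite^'n \<Rightarrow> real" where
  "perron_eigenvalue A =
     Max {cmod z | z. \<exists>v :: complex^'n. v \<noteq> 0 \<and>
            (\<chi> i j. complex_of_real (A $ i $ j)) *v v = z *s v}"

definition topological_entropy ::
  "('s::finite \<times> 's) set \<Rightarrow> 'x::finite itself \<Rightarrow> real" where
  "topological_entropy E _ = log (real CARD('x)) (perron_eigenvalue (adj_matrix E))"

definition simple_cycle :: "('s \<times> 's) set \<Rightarrow> 's list \<Rightarrow> bool" where
  "simple_cycle E cs \<longleftrightarrow> cs \<noteq> [] \<and> distinct cs \<and>
     (\<forall>i < length cs. (cs ! i, cs ! (Suc i mod length cs)) \<in> E)"

definition cycle_ones :: "('s \<times> 's \<Rightarrow> bool) \<Rightarrow> 's list \<Rightarrow> nat" where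
  "cycle_ones lab cs = card {i. i < length cs \<and> lab (cs ! i, cs ! (Suc i mod length cs))}"

definition max_ratio :: "('s \<times> 's) set \<Rightarrow> ('s \<times> 's \<Rightarrow> bool) \<Rightarrow> real" where
  "max_ratio E lab =
     Max {real (cycle_ones lab cs) / real (length cs) | cs. simple_cycle E cs}"

end

theory Submission
  imports Defs "Jordan_Normal_Form.Spectral_Radius"
begin

text \<open>
  Upper bound: along a simple cycle of maximal ratio \<open>\<tau>\<close> the noise can erase a \<open>\<tau>\<close>-fraction of
  any block of length \<open>n\<close> (a suitable starting point on the cycle is found by averaging), and two
  codewords agreeing on the unerased positions of one such noise word are confused. Hence a code
  has at most \<open>q ^ (n (1 - \<tau>))\<close> words.

  Lower bound: a walk splits into simple cycles and a simple path, so an admissible noise word of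
  length \<open>n\<close> has at most \<open>\<tau> n + |S|\<close> erasures. A word is therefore confusable with at most
  \<open>|V n| q ^ (\<tau> n + |S|)\<close> words, where \<open>V n\<close> is the set of admissible noise words, and a greedy
  independent set of the confusability graph is a code with at least \<open>q ^ n / (|V n| q ^ (\<tau> n + |S|))\<close>
  words. Finally \<open>|V n| \<le> K \<mu> ^ n\<close> for every \<open>\<mu>\<close> above the Perron eigenvalue, since the powers of
  a matrix with spectral radius below \<open>1\<close> are bounded (Jordan normal form).
\<close>

definition walk_edges :: "'s list \<Rightarrow> ('s \<times> 's) list" where
  "walk_edges ss = zip ss (tl ss)"

definition walk :: "('s \<times> 's) set \<Rightarrow> 's list \<Rightarrow> bool" where
  "walk E ss \<longleftrightarrow> set (walk_edges ss) \<subseteq> E"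

definition erasures :: "('s \<times> 's \<Rightarrow> bool) \<Rightarrow> 's list \<Rightarrow> nat" where
  "erasures lab ss = length (filter lab (walk_edges ss))"

lemma walk_edges_Cons_Cons [simp]: "walk_edges (a # b # ss) = (a, b) # walk_edges (b # ss)"
  and walk_edges_singleton [simp]: "walk_edges [a] = []"
  and walk_edges_Nil [simp]: "walk_edges [] = []"
  and length_walk_edges [simp]: "length (walk_edges ss) = length ss - 1"
  by (simp_all add: walk_edges_def)

lemma walk_edges_append:
  "walk_edges (xs @ y # ys) = walk_edges (xs @ [y]) @ walk_edges (y # ys)"
  by (induction xs rule: induct_list012) simp_all

lemma walk_edges_splice:
  "walk_edges (xs @ z # u @ z # ys) = walk_edges (xs @ [z]) @ walk_edges (z # u @ [z]) @ walk_edges (z # ys)"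
  using walk_edges_append[of xs z "u @ z # ys"] walk_edges_append[of "z # u" z ys] by simp

lemma walk_splice:
  "walk E (xs @ z # u @ z # ys) \<longleftrightarrow> walk E (xs @ z # ys) \<and> walk E (z # u @ [z])"
  unfolding walk_def walk_edges_splice walk_edges_append[of xs z ys] by auto

lemma erasures_splice:
  "erasures lab (xs @ z # u @ z # ys) = erasures lab (xs @ z # ys) + erasures lab (z # u @ [z])"
  unfolding erasures_def walk_edges_splice walk_edges_append[of xs z ys] by simp

lemma erasures_le_length: "erasures lab ss \<le> length ss - 1"
  unfolding erasures_def using length_filter_le[of lab "walk_edges ss"] by simp

lemma length_le_card_if_distinct: "distinct (xs :: 'a::finite list) \<Longrightarrow> length xs \<le> CARD('a)"
  using card_mono[of UNIV "set xs"] by (simp add: distinct_card)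

section \<open>Simple cycles and the maximal ratio\<close>

lemma walk_edges_closed: "cs \<noteq> [] \<Longrightarrow> walk_edges (cs @ [hd cs]) = zip cs (rotate1 cs)"
proof (cases cs)
  case (Cons a l)
  have "zip ((a # l) @ [a]) (l @ [a]) = zip (a # l) (l @ [a])"
    by (simp only: zip_append1) simp
  with Cons show ?thesis by (simp add: walk_edges_def)
qed simp

lemma simple_cycle_iff_walk:
  "simple_cycle E cs \<longleftrightarrow> cs \<noteq> [] \<and> distinct cs \<and> walk E (cs @ [hd cs])"
proof -
  have "(\<forall>i < length cs. (cs ! i, cs ! (Suc i mod length cs)) \<in> E) \<longleftrightarrow> set (zip cs (rotate1 cs)) \<subseteq> E"
    by (auto simp: set_zip nth_rotate1)
  then show ?thesis
    unfolding simple_cycle_def walk_def by (metis walk_edges_closed)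
qed

lemma cycle_ones_eq_erasures:
  assumes "cs \<noteq> []" shows "cycle_ones lab cs = erasures lab (cs @ [hd cs])"
proof -
  have "cycle_ones lab cs = length (filter lab (zip cs (rotate1 cs)))"
    unfolding cycle_ones_def length_filter_conv_card
    by (auto simp: nth_rotate1 intro!: arg_cong[of _ _ card])
  with assms show ?thesis by (simp add: erasures_def walk_edges_closed)
qed

definition cycle_ratios :: "('s \<times> 's) set \<Rightarrow> ('s \<times> 's \<Rightarrow> bool) \<Rightarrow> real set" where
  "cycle_ratios E lab = {real (cycle_ones lab cs) / real (length cs) | cs. simple_cycle E cs}"

lemma max_ratio_eq_Max: "max_ratio E lab = Max (cycle_ratios E lab)"
  unfolding max_ratio_def cycle_ratios_def ..

lemma finite_cycle_ratios: "finite (cycle_ratios (E :: ('s::finite \<times> 's) set) lab)"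
proof -
  have "{cs. simple_cycle E cs} \<subseteq> {cs. set cs \<subseteq> UNIV \<and> length cs \<le> CARD('s)}"
    unfolding simple_cycle_def using length_le_card_if_distinct by blast
  then have "finite {cs. simple_cycle E cs}"
    using finite_lists_length_le[OF finite_class.finite_UNIV] by (rule finite_subset)
  then show ?thesis
    unfolding cycle_ratios_def by (simp add: setcompr_eq_image)
qed

lemma ratio_le_max_ratio:
  fixes E :: "('s::finite \<times> 's) set"
  assumes "simple_cycle E cs"
  shows "real (cycle_ones lab cs) / real (length cs) \<le> max_ratio E lab"
  unfolding max_ratio_eq_Max using assms
  by (intro Max_ge finite_cycle_ratios) (unfold cycle_ratios_def, blast)

lemma closed_walk_has_simple_cycle:
  "cs \<noteq> [] \<Longrightarrow> walk E (cs @ [hd cs]) \<Longrightarrow> \<exists>c. simple_cycle E c"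
proof (induction "length cs" arbitrary: cs rule: less_induct)
  case less
  show ?case
  proof (cases "distinct cs")
    case True
    with less.prems show ?thesis by (auto simp: simple_cycle_iff_walk)
  next
    case False
    then obtain p z u r where cs: "cs = p @ [z] @ u @ [z] @ r"
      using not_distinct_decomp by blast
    have "walk E (z # u @ [z])"
      using less.prems(2) walk_splice[of E p z u "r @ [hd cs]"] cs by simp
    with cs less.hyps[of "z # u"] show ?thesis by simp
  qed
qed

text \<open>A closed walk splits into simple cycles, each erased at rate at most \<open>max_ratio\<close>.\<close>

lemma closed_walk_erasures_le:
  fixes E :: "('s::finite \<times> 's) set"
  shows "cs \<noteq> [] \<Longrightarrow> walk E (cs @ [hd cs]) \<Longrightarrow>
    real (erasures lab (cs @ [hd cs])) \<le> max_ratio E lab * real (length cs)"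
proof (induction "length cs" arbitrary: cs rule: less_induct)
  case less
  show ?case
  proof (cases "distinct cs")
    case True
    with less.prems have "simple_cycle E cs" by (simp add: simple_cycle_iff_walk)
    from ratio_le_max_ratio[OF this, of lab] less.prems(1) show ?thesis
      by (simp add: cycle_ones_eq_erasures field_simps)
  next
    case False
    then obtain p z u r where cs: "cs = p @ [z] @ u @ [z] @ r"
      using not_distinct_decomp by blast
    define cs' where "cs' = p @ z # r"
    have hd: "hd cs' = hd cs" unfolding cs cs'_def by (cases p) simp_all
    have split: "cs @ [hd cs] = p @ z # u @ z # (r @ [hd cs])" unfolding cs by simp
    have walks: "walk E (cs' @ [hd cs'])" "walk E (z # u @ [z])"
      using less.prems(2) unfolding split walk_splice hd by (simp_all add: cs'_def)
    have "real (erasures lab (cs @ [hd cs]))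
        = real (erasures lab (cs' @ [hd cs'])) + real (erasures lab (z # u @ [z]))"
      unfolding split erasures_splice hd by (simp add: cs'_def)
    also have "\<dots> \<le> max_ratio E lab * real (length cs') + max_ratio E lab * real (length (z # u))"
      using less.hyps[of cs'] less.hyps[of "z # u"] walks by (intro add_mono) (simp_all add: cs cs'_def)
    also have "\<dots> = max_ratio E lab * real (length cs)"
      by (simp add: cs cs'_def algebra_simps)
    finally show ?thesis .
  qed
qed

lemma walk_erasures_le:
  fixes E :: "('s::finite \<times> 's) set"
  assumes "0 \<le> max_ratio E lab"
  shows "walk E ss \<Longrightarrow> real (erasures lab ss) \<le> max_ratio E lab * real (length ss - 1) + CARD('s)"
proof (induction "length ss" arbitrary: ss rule: less_induct)
  case less
  show ?case
  proof (cases "distinct ss")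
    case True
    then have "erasures lab ss \<le> CARD('s)"
      using erasures_le_length[of lab ss] length_le_card_if_distinct[of ss] by linarith
    with assms show ?thesis by (simp add: add_increasing)
  next
    case False
    then obtain p z u r where ss: "ss = p @ z # u @ z # r"
      using not_distinct_decomp by fastforce
    have walks: "walk E (p @ z # r)" "walk E (z # u @ [z])"
      using less.prems unfolding ss walk_splice by simp_all
    have "real (erasures lab ss) = real (erasures lab (p @ z # r)) + real (erasures lab (z # u @ [z]))"
      unfolding ss erasures_splice by simp
    also have "\<dots> \<le> (max_ratio E lab * real (length (p @ z # r) - 1) + CARD('s))
        + max_ratio E lab * real (length (z # u))"
      using less.hyps[of "p @ z # r"] closed_walk_erasures_le[of "z # u"] walks
      by (intro add_mono) (simp_all add: ss)
    also have "\<dots> = max_ratio E lab * real (length ss - 1) + CARD('s)"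
      by (simp add: ss algebra_simps)
    finally show ?thesis .
  qed
qed

lemma rtrancl_imp_walk:
  "(x, y) \<in> E\<^sup>* \<Longrightarrow> \<exists>ss. ss \<noteq> [] \<and> hd ss = x \<and> last ss = y \<and> walk E ss"
proof (induction rule: converse_rtrancl_induct)
  case base
  show ?case by (intro exI[of _ "[y]"]) (simp add: walk_def)
next
  case (step x z)
  then obtain ss where "ss \<noteq> []" "hd ss = z" "last ss = y" "walk E ss" by blast
  with step.hyps(1) show ?case
    by (intro exI[of _ "x # ss"]) (cases ss; simp add: walk_def)
qed

lemma fsec_simple_cycle_exists:
  assumes "fsec E lab" shows "\<exists>cs. simple_cycle E cs"
proof -
  obtain a b where ab: "(a, b) \<in> E" using assms unfolding fsec_def by auto
  have "(b, a) \<in> E\<^sup>*" using assms unfolding fsec_def strongly_connected_def by auto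
  then obtain ss where ss: "ss \<noteq> []" "hd ss = b" "last ss = a" "walk E ss"
    using rtrancl_imp_walk by metis
  define cs where "cs = a # butlast ss"
  have "cs @ [hd cs] = a # ss" unfolding cs_def using ss(1,3) by (simp add: snoc_eq_iff_butlast)
  moreover have "walk E (a # ss)" using ss ab by (cases ss) (simp_all add: walk_def)
  ultimately show ?thesis
    using closed_walk_has_simple_cycle[of cs E] by (simp add: cs_def)
qed

lemma max_ratio_in_cycle_ratios:
  fixes E :: "('s::finite \<times> 's) set"
  assumes "fsec E lab" shows "max_ratio E lab \<in> cycle_ratios E lab"
  unfolding max_ratio_eq_Max using fsec_simple_cycle_exists[OF assms]
  by (intro Max_in finite_cycle_ratios) (auto simp: cycle_ratios_def)

lemma max_ratio_nonneg:
  fixes E :: "('s::finite \<times> 's) set"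
  assumes "fsec E lab" shows "0 \<le> max_ratio E lab"
  using max_ratio_in_cycle_ratios[OF assms] by (auto simp: cycle_ratios_def)

lemma admissible_Nil [simp]: "admissible_from E lab s []"
  unfolding admissible_from_def by (intro exI[of _ "[s]"]) simp

lemma admissible_Cons:
  "admissible_from E lab s (b # v) \<longleftrightarrow>
     (\<exists>s'. (s, s') \<in> E \<and> b = lab (s, s') \<and> admissible_from E lab s' v)"
proof
  assume "admissible_from E lab s (b # v)"
  then obtain ss where ss: "length ss = Suc (length (b # v))" "ss ! 0 = s"
    "\<forall>t < length (b # v). (ss ! t, ss ! Suc t) \<in> E \<and> (b # v) ! t = lab (ss ! t, ss ! Suc t)"
    unfolding admissible_from_def by blast
  have "admissible_from E lab (ss ! 1) v"
    unfolding admissible_from_def using ss(1) ss(3)[rule_format, of "Suc _"]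
    by (intro exI[of _ "tl ss"]) (simp add: nth_tl)
  with ss(2) ss(3)[rule_format, of 0] show "\<exists>s'. (s, s') \<in> E \<and> b = lab (s, s') \<and> admissible_from E lab s' v"
    by auto
next
  assume "\<exists>s'. (s, s') \<in> E \<and> b = lab (s, s') \<and> admissible_from E lab s' v"
  then obtain s' ss where "(s, s') \<in> E" "b = lab (s, s')" "length ss = Suc (length v)" "ss ! 0 = s'"
    "\<forall>t < length v. (ss ! t, ss ! Suc t) \<in> E \<and> v ! t = lab (ss ! t, ss ! Suc t)"
    unfolding admissible_from_def by blast
  then show "admissible_from E lab s (b # v)"
    unfolding admissible_from_def by (intro exI[of _ "s # ss"]) (auto simp: less_Suc_eq_0_disj)
qed

lemma admissible_imp_walk:
  "admissible_from E lab s v \<Longrightarrow>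
     \<exists>ss. length ss = Suc (length v) \<and> hd ss = s \<and> walk E ss \<and> v = map lab (walk_edges ss)"
proof (induction v arbitrary: s)
  case Nil
  show ?case by (intro exI[of _ "[s]"]) (simp add: walk_def)
next
  case (Cons b v)
  then obtain s' where s': "(s, s') \<in> E" "b = lab (s, s')" "admissible_from E lab s' v"
    by (auto simp: admissible_Cons)
  with Cons.IH obtain ss where "length ss = Suc (length v)" "hd ss = s'" "walk E ss"
    "v = map lab (walk_edges ss)" by blast
  with s' show ?case
    by (intro exI[of _ "s # ss"]) (cases ss; simp add: walk_def)
qed

lemma admissible_erasures_le:
  fixes E :: "('s::finite \<times> 's) set"
  assumes "fsec E lab" "admissible_from E lab s v"
  shows "real (length (filter id v)) \<le> max_ratio E lab * real (length v) + CARD('s)"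
proof -
  obtain ss where ss: "length ss = Suc (length v)" "walk E ss" "v = map lab (walk_edges ss)"
    using admissible_imp_walk[OF assms(2)] by blast
  then have "length (filter id v) = erasures lab ss"
    by (simp add: erasures_def filter_map comp_def)
  with walk_erasures_le[OF max_ratio_nonneg[OF assms(1)] ss(2)] ss(1) show ?thesis by simp
qed

lemma fsec_out_edge:
  assumes "fsec E lab" shows "\<exists>s'. (s, s') \<in> E"
proof -
  obtain a b where ab: "(a, b) \<in> E" using assms unfolding fsec_def by auto
  have "(s, a) \<in> E\<^sup>*" using assms unfolding fsec_def strongly_connected_def by auto
  then show ?thesis using ab by (cases rule: converse_rtranclE) auto
qed

lemma fsec_admissible_exists:
  assumes "fsec E lab" shows "\<exists>v. length v = n \<and> admissible_from E lab s v"
proof (induction n arbitrary: s)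
  case (Suc n)
  obtain s' where s': "(s, s') \<in> E" using fsec_out_edge[OF assms] by blast
  with Suc[of s'] show ?case
    by (metis admissible_Cons length_Cons)
qed auto

definition noise_words :: "('s \<times> 's) set \<Rightarrow> ('s \<times> 's \<Rightarrow> bool) \<Rightarrow> nat \<Rightarrow> 's \<Rightarrow> bool list set" where
  "noise_words E lab n s = {v. length v = n \<and> admissible_from E lab s v}"

definition admissible_words :: "('s \<times> 's) set \<Rightarrow> ('s \<times> 's \<Rightarrow> bool) \<Rightarrow> nat \<Rightarrow> bool list set" where
  "admissible_words E lab n = (\<Union>s. noise_words E lab n s)"

lemma card_lists_of_length: "card {xs :: 'x::finite list. length xs = n} = CARD('x) ^ n"
  using card_lists_length_eq[of "UNIV :: 'x set" n] by simp

lemma finite_lists_of_length: "finite {xs :: 'x::finite list. length xs = n}"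
  using finite_lists_length_eq[of "UNIV :: 'x set" n] by simp

lemma finite_noise_words: "finite (noise_words E lab n s)"
  by (rule finite_subset[OF _ finite_lists_of_length[of n]]) (auto simp: noise_words_def)

lemma finite_admissible_words: "finite (admissible_words E lab n)"
  by (rule finite_subset[OF _ finite_lists_of_length[of n]])
    (auto simp: admissible_words_def noise_words_def)

lemma noise_words_0 [simp]: "noise_words E lab 0 s = {[]}"
  by (auto simp: noise_words_def)

lemma card_noise_words_Suc_le:
  fixes E :: "('s::finite \<times> 's) set"
  shows "card (noise_words E lab (Suc n) s) \<le> (\<Sum>s'\<in>{s'. (s, s') \<in> E}. card (noise_words E lab n s'))"
proof -
  have "noise_words E lab (Suc n) s \<subseteq> (\<Union>s'\<in>{s'. (s, s') \<in> E}. (#) (lab (s, s')) ` noise_words E lab n s')"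
    by (fastforce simp: noise_words_def length_Suc_conv admissible_Cons)
  then have "card (noise_words E lab (Suc n) s)
      \<le> card (\<Union>s'\<in>{s'. (s, s') \<in> E}. (#) (lab (s, s')) ` noise_words E lab n s')"
    by (intro card_mono) (auto intro: finite_noise_words)
  also have "\<dots> \<le> (\<Sum>s'\<in>{s'. (s, s') \<in> E}. card ((#) (lab (s, s')) ` noise_words E lab n s'))"
    by (rule card_UN_le) simp
  also have "\<dots> \<le> (\<Sum>s'\<in>{s'. (s, s') \<in> E}. card (noise_words E lab n s'))"
    by (intro sum_mono card_image_le finite_noise_words)
  finally show ?thesis .
qed

section \<open>Channel outputs and confusability\<close>

lemma channel_out_Cons [simp]:
  "channel_out (x # xs) (v # vs) = (if v then None else Some x) # channel_out xs vs"
  by (simp add: channel_out_def)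

lemma channel_out_Nil [simp]: "channel_out [] vs = []" "channel_out xs [] = []"
  by (simp_all add: channel_out_def)

text \<open>The output reveals the noise word, since \<open>None\<close> marks exactly the erased positions.\<close>

lemma channel_out_eq_imp_noise_eq:
  "length x1 = length v1 \<Longrightarrow> length x2 = length v2 \<Longrightarrow>
    channel_out x1 v1 = channel_out x2 v2 \<Longrightarrow> v1 = v2"
proof (induction v1 arbitrary: x1 x2 v2)
  case Nil
  then show ?case by (cases x2; cases v2) auto
next
  case (Cons b v1)
  then show ?case
    by (cases x1; cases x2; cases v2) (auto split: if_splits)
qed

definition unerased :: "bool list \<Rightarrow> 'x list \<Rightarrow> 'x list" where
  "unerased v x = map snd (filter (Not \<circ> fst) (zip v x))"

definition erased :: "bool list \<Rightarrow> 'x list \<Rightarrow> 'x list" where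
  "erased v x = map snd (filter fst (zip v x))"

lemma unerased_Cons [simp]: "unerased (b # v) (y # x) = (if b then unerased v x else y # unerased v x)"
  and erased_Cons [simp]: "erased (b # v) (y # x) = (if b then y # erased v x else erased v x)"
  and unerased_Nil [simp]: "unerased [] x = []"
  and erased_Nil [simp]: "erased [] x = []"
  by (simp_all add: unerased_def erased_def)

lemma length_unerased: "length x = length v \<Longrightarrow> length (unerased v x) = length v - length (filter id v)"
  by (induction v arbitrary: x) (auto simp: length_Suc_conv Suc_diff_le length_filter_le)

lemma length_erased: "length x = length v \<Longrightarrow> length (erased v x) = length (filter id v)"
  by (induction v arbitrary: x) (auto simp: length_Suc_conv)

lemma channel_out_eq_iff_unerased_eq:
  "length x1 = length v \<Longrightarrow> length x2 = length v \<Longrightarrow>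
    channel_out x1 v = channel_out x2 v \<longleftrightarrow> unerased v x1 = unerased v x2"
  by (induction v arbitrary: x1 x2) (auto simp: length_Suc_conv)

lemma channel_out_eq_and_erased_eq_imp_eq:
  "length x1 = length v \<Longrightarrow> length x2 = length v \<Longrightarrow>
    channel_out x1 v = channel_out x2 v \<Longrightarrow> erased v x1 = erased v x2 \<Longrightarrow> x1 = x2"
  by (induction v arbitrary: x1 x2) (auto simp: length_Suc_conv split: if_splits)

definition confusable ::
  "('s \<times> 's) set \<Rightarrow> ('s \<times> 's \<Rightarrow> bool) \<Rightarrow> nat \<Rightarrow> 'x list \<Rightarrow> 'x list \<Rightarrow> bool" where
  "confusable E lab n x1 x2 \<longleftrightarrow>
     (\<exists>s1 s2 v1 v2. length v1 = n \<and> length v2 = n \<and>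
        admissible_from E lab s1 v1 \<and> admissible_from E lab s2 v2 \<and>
        channel_out x1 v1 = channel_out x2 v2)"

lemma zero_error_code_iff_pairwise:
  "zero_error_code E lab n F \<longleftrightarrow>
     (\<forall>x \<in> F. length x = n) \<and> pairwise (\<lambda>x1 x2. \<not> confusable E lab n x1 x2) F"
  unfolding zero_error_code_def confusable_def pairwise_def by blast

lemma card_zero_error_code_pos:
  fixes F :: "'x::finite list set"
  assumes "zero_error_code E lab n F" "F \<noteq> {}"
  shows "0 < card F"
proof -
  have "F \<subseteq> {xs. length xs = n}" using assms(1) by (auto simp: zero_error_code_def)
  with assms(2) show ?thesis by (metis card_gt_0_iff finite_lists_of_length finite_subset)
qed

text \<open>Two codewords that agree off the erasures of one admissible noise word are confused by it.\<close>

lemma card_zero_error_code_le: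
  fixes F :: "'x::finite list set"
  assumes code: "zero_error_code E lab n F" and v: "admissible_from E lab s v" "length v = n"
  shows "card F \<le> CARD('x) ^ (n - length (filter id v))"
proof -
  have len: "\<forall>x \<in> F. length x = n" using code by (simp add: zero_error_code_iff_pairwise)
  have "inj_on (unerased v) F"
  proof (rule inj_onI, rule ccontr)
    fix x1 x2 assume x: "x1 \<in> F" "x2 \<in> F" "unerased v x1 = unerased v x2" "x1 \<noteq> x2"
    then have "confusable E lab n x1 x2"
      unfolding confusable_def using v len channel_out_eq_iff_unerased_eq[of x1 v x2] by auto
    with code x show False by (auto simp: zero_error_code_iff_pairwise pairwise_def)
  qed
  moreover have "unerased v ` F \<subseteq> {xs. length xs = n - length (filter id v)}"
    using len v(2) by (auto simp: length_unerased)
  ultimately have "card F \<le> card {xs :: 'x list. length xs = n - length (filter id v)}"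
    by (rule card_inj_on_le) (rule finite_lists_of_length)
  then show ?thesis by (simp add: card_lists_of_length)
qed

section \<open>The upper bound\<close>

definition cycle_label :: "('s \<times> 's \<Rightarrow> bool) \<Rightarrow> 's list \<Rightarrow> nat \<Rightarrow> bool" where
  "cycle_label lab cs i = lab (cs ! (i mod length cs), cs ! (Suc i mod length cs))"

definition cycle_noise :: "('s \<times> 's \<Rightarrow> bool) \<Rightarrow> 's list \<Rightarrow> nat \<Rightarrow> nat \<Rightarrow> bool list" where
  "cycle_noise lab cs j n = map (\<lambda>t. cycle_label lab cs (j + t)) [0..<n]"

lemma cycle_noise_admissible:
  assumes "simple_cycle E cs"
  shows "admissible_from E lab (cs ! (j mod length cs)) (cycle_noise lab cs j n)"
proof (induction n arbitrary: j)
  case 0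
  show ?case by (simp add: cycle_noise_def)
next
  case (Suc n)
  have "0 < length cs" using assms by (simp add: simple_cycle_def)
  with assms have "(cs ! (j mod length cs), cs ! (Suc (j mod length cs) mod length cs)) \<in> E"
    unfolding simple_cycle_def by simp
  then have "(cs ! (j mod length cs), cs ! (Suc j mod length cs)) \<in> E"
    by (simp add: mod_Suc_eq)
  moreover have "cycle_noise lab cs j (Suc n) = cycle_label lab cs j # cycle_noise lab cs (Suc j) n"
    by (simp add: cycle_noise_def map_upt_Suc del: upt_Suc)
  ultimately show ?case
    using Suc.IH[of "Suc j"] by (auto simp: admissible_Cons cycle_label_def)
qed

lemma length_cycle_noise [simp]: "length (cycle_noise lab cs j n) = n"
  by (simp add: cycle_noise_def)

lemma count_cycle_noise:
  "length (filter id (cycle_noise lab cs j n)) = (\<Sum>t<n. if cycle_label lab cs (j + t) then 1 else 0)"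
  by (induction n) (simp_all add: cycle_noise_def)

lemma card_less_filter_eq_sum: "card {i. i < (l::nat) \<and> P i} = (\<Sum>i<l. if P i then 1 else 0)"
proof -
  have "(\<Sum>i<l. if P i then 1 else 0) = (\<Sum>i \<in> {i \<in> {..<l}. P i}. 1 :: nat)"
    by (rule sum.inter_filter[symmetric]) simp
  then show ?thesis by simp
qed

lemma cycle_ones_eq_sum:
  "cycle_ones lab cs = (\<Sum>i<length cs. if cycle_label lab cs i then 1 else 0)"
  unfolding cycle_ones_def card_less_filter_eq_sum cycle_label_def by (intro sum.cong) simp_all

lemma sum_periodic_shift:
  fixes g :: "nat \<Rightarrow> 'a::cancel_comm_monoid_add"
  assumes "\<And>i. g (i + l) = g i"
  shows "(\<Sum>j<l. g (j + t)) = (\<Sum>j<l. g j)"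
proof (induction t)
  case (Suc t)
  have "(\<Sum>j<l. g (j + Suc t)) + g t = (\<Sum>j<Suc l. g (j + t))"
    by (subst sum.lessThan_Suc_shift) (simp add: add.commute)
  also have "\<dots> = (\<Sum>j<l. g (j + t)) + g t"
    using assms[of t] by (simp add: add.commute)
  finally show ?case using Suc by simp
qed simp

lemma exists_ge_average:
  fixes f :: "nat \<Rightarrow> nat"
  assumes "0 < l" shows "\<exists>j<l. (\<Sum>i<l. f i) \<le> l * f j"
proof -
  have "Max (f ` {..<l}) \<in> f ` {..<l}" using assms by (intro Max_in) auto
  then obtain j where j: "j < l" "f j = Max (f ` {..<l})" by auto
  then have "\<forall>i<l. f i \<le> f j" by simp
  then have "(\<Sum>i<l. f i) \<le> l * f j" using sum_bounded_above[of "{..<l}" f "f j"] by simp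
  with j show ?thesis by blast
qed

text \<open>Averaging over the rotations of a cycle: some rotation erases at least the cycle's share.\<close>

lemma cycle_noise_rich_rotation:
  assumes "simple_cycle E cs"
  shows "\<exists>j < length cs. n * cycle_ones lab cs \<le> length cs * length (filter id (cycle_noise lab cs j n))"
proof -
  let ?l = "length cs" and ?w = "\<lambda>i. if cycle_label lab cs i then 1 else 0 :: nat"
  have l: "0 < ?l" using assms by (simp add: simple_cycle_def)
  have periodic: "?w (i + ?l) = ?w i" for i
    using mod_add_self2[of "Suc i" ?l] by (simp add: cycle_label_def)
  have "(\<Sum>j<?l. length (filter id (cycle_noise lab cs j n))) = (\<Sum>t<n. \<Sum>j<?l. ?w (j + t))"
    unfolding count_cycle_noise by (rule sum.swap)
  also have "\<dots> = n * cycle_ones lab cs"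
    using sum_periodic_shift[of ?w ?l, OF periodic] by (simp add: cycle_ones_eq_sum)
  finally show ?thesis using exists_ge_average[OF l] by metis
qed

lemma log_le_of_le_power:
  fixes q c k :: nat
  assumes "2 \<le> q" "0 < c" "c \<le> q ^ k"
  shows "log q c \<le> k"
proof -
  have "log q c \<le> log q (q ^ k)"
    using assms by (intro log_mono) (simp_all flip: of_nat_power)
  also have "\<dots> = k" using assms(1) by (simp add: log_nat_power)
  finally show ?thesis .
qed

lemma zero_error_rate_le:
  fixes E :: "('s::finite \<times> 's) set" and F :: "'x::finite list set"
  assumes fs: "fsec E lab" and q: "CARD('x) \<ge> 2"
    and n: "n \<ge> 1" and F: "F \<noteq> {}" and code: "zero_error_code E lab n F"
  shows "log (real CARD('x)) (real (card F)) / real n \<le> 1 - max_ratio E lab"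
proof -
  obtain cs where cs: "simple_cycle E cs"
    and tau: "max_ratio E lab = real (cycle_ones lab cs) / real (length cs)"
    using max_ratio_in_cycle_ratios[OF fs] unfolding cycle_ratios_def by auto
  have l: "0 < length cs" using cs by (simp add: simple_cycle_def)
  obtain j where j: "n * cycle_ones lab cs \<le> length cs * length (filter id (cycle_noise lab cs j n))"
    using cycle_noise_rich_rotation[OF cs] by blast
  define k where "k = length (filter id (cycle_noise lab cs j n))"
  have k: "k \<le> n" unfolding k_def using length_filter_le[of id "cycle_noise lab cs j n"] by simp
  have "real n * max_ratio E lab \<le> real k"
    using j l unfolding tau k_def by (simp add: field_simps flip: of_nat_mult)
  have "log (real CARD('x)) (real (card F)) \<le> real (n - k)"
    using card_zero_error_code_pos[OF code F] card_zero_error_code_le[OF code cycle_noise_admissible[OF cs]]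
    by (intro log_le_of_le_power[OF q]) (simp_all add: k_def)
  also have "\<dots> \<le> real n * (1 - max_ratio E lab)"
    using k \<open>real n * max_ratio E lab \<le> real k\<close> by (simp add: of_nat_diff algebra_simps)
  finally show ?thesis
    using n by (simp add: pos_divide_le_eq mult.commute)
qed

section \<open>Codes from independent sets of the confusability graph\<close>

text \<open>Greedy: keep some \<open>x\<close>, discard its at most \<open>D\<close> neighbours, and repeat.\<close>

lemma exists_large_independent_subset:
  assumes "finite U" and sym: "\<And>x y. R x y \<Longrightarrow> R y x"
    and "\<And>x. x \<in> U \<Longrightarrow> R x x" and "\<And>x. x \<in> U \<Longrightarrow> card {y \<in> U. R x y} \<le> D"
  shows "\<exists>F \<subseteq> U. pairwise (\<lambda>x y. \<not> R x y) F \<and> card U \<le> D * card F"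
  using assms(1,3,4)
proof (induction U rule: finite_psubset_induct)
  case (psubset U)
  show ?case
  proof (cases "U = {}")
    case False
    then obtain x where x: "x \<in> U" by blast
    define N where "N = {y \<in> U. R x y}"
    have N: "N \<subseteq> U" "x \<in> N" "finite N"
      using x psubset.hyps psubset.prems(1) by (auto simp: N_def)
    have "card {y \<in> U - N. R z y} \<le> D" if "z \<in> U - N" for z
      using card_mono[of "{y \<in> U. R z y}" "{y \<in> U - N. R z y}"] psubset.hyps psubset.prems(2)[of z] that
      by force
    then obtain F where F: "F \<subseteq> U - N" "pairwise (\<lambda>x y. \<not> R x y) F" "card (U - N) \<le> D * card F"
      using psubset.IH[of "U - N"] psubset.prems(1) N(2) x by blast
    have "card U = card (U - N) + card N"
      using card_Diff_subset[OF N(3,1)] card_mono[OF psubset.hyps N(1)] by simp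
    also have "\<dots> \<le> D * card F + D"
      using F(3) psubset.prems(2)[OF x] by (simp add: N_def)
    also have "\<dots> = D * card (insert x F)"
      using F(1) N(2) finite_subset[OF F(1)] psubset.hyps
      by (subst card_insert_disjoint) auto
    finally have "card U \<le> D * card (insert x F)" .
    moreover have "pairwise (\<lambda>x y. \<not> R x y) (insert x F)"
      using F(1,2) sym unfolding pairwise_insert N_def by blast
    ultimately show ?thesis using F(1) x by (intro exI[of _ "insert x F"]) auto
  qed simp
qed

lemma card_confusable_le:
  fixes x :: "'x::finite list"
  assumes "length x = n"
    and m: "\<And>v. v \<in> admissible_words E lab n \<Longrightarrow> length (filter id v) \<le> m"
  shows "card {y. length y = n \<and> confusable E lab n x y}
    \<le> card (admissible_words E lab n) * CARD('x) ^ m"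
proof -
  let ?V = "admissible_words E lab n"
  let ?C = "\<lambda>v. {y :: 'x list. length y = n \<and> channel_out y v = channel_out x v}"
  have "{y. length y = n \<and> confusable E lab n x y} \<subseteq> (\<Union>v \<in> ?V. ?C v)"
  proof
    fix y assume "y \<in> {y. length y = n \<and> confusable E lab n x y}"
    then obtain s1 s2 v1 v2 where y: "length y = n" "length v1 = n" "length v2 = n"
      "admissible_from E lab s1 v1" "admissible_from E lab s2 v2" "channel_out x v1 = channel_out y v2"
      unfolding confusable_def by blast
    then have "v1 = v2" using assms(1) by (intro channel_out_eq_imp_noise_eq[OF _ _ y(6)]) simp_all
    moreover have "v2 \<in> ?V" using y by (auto simp: admissible_words_def noise_words_def)
    ultimately show "y \<in> (\<Union>v \<in> ?V. ?C v)" using y by (intro UN_I[of v2]) simp_all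
  qed
  then have "card {y. length y = n \<and> confusable E lab n x y} \<le> card (\<Union>v \<in> ?V. ?C v)"
    by (intro card_mono) (auto intro: finite_admissible_words finite_subset[OF _ finite_lists_of_length])
  also have "\<dots> \<le> (\<Sum>v \<in> ?V. card (?C v))"
    by (rule card_UN_le[OF finite_admissible_words])
  also have "\<dots> \<le> (\<Sum>v \<in> ?V. CARD('x) ^ m)"
  proof (rule sum_mono)
    fix v assume v: "v \<in> ?V"
    then have len: "length v = n" by (simp add: admissible_words_def noise_words_def)
    have "inj_on (erased v) (?C v)"
      using len by (intro inj_onI) (auto intro: channel_out_eq_and_erased_eq_imp_eq)
    moreover have "erased v ` ?C v \<subseteq> {xs. length xs = length (filter id v)}"
      using len by (auto simp: length_erased)
    ultimately have "card (?C v) \<le> card {xs :: 'x list. length xs = length (filter id v)}"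
      by (rule card_inj_on_le) (rule finite_lists_of_length)
    also have "\<dots> \<le> CARD('x) ^ m"
      using m[OF v] by (simp add: card_lists_of_length power_increasing)
    finally show "card (?C v) \<le> CARD('x) ^ m" .
  qed
  finally show ?thesis by simp
qed

lemma zero_error_code_exists:
  fixes E :: "('s::finite \<times> 's) set"
  assumes fs: "fsec E lab"
    and m: "\<And>v. v \<in> admissible_words E lab n \<Longrightarrow> length (filter id v) \<le> m"
  shows "\<exists>F :: 'x::finite list set. F \<noteq> {} \<and> zero_error_code E lab n F \<and>
     CARD('x) ^ n \<le> card F * (card (admissible_words E lab n) * CARD('x) ^ m)"
proof -
  let ?U = "{xs :: 'x list. length xs = n}"
  let ?D = "card (admissible_words E lab n) * CARD('x) ^ m"
  obtain s v where "length v = n" "admissible_from E lab s v"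
    using fsec_admissible_exists[OF fs] by blast
  then have refl: "confusable E lab n x x" if "x \<in> ?U" for x
    unfolding confusable_def by blast
  have sym: "confusable E lab n y x" if "confusable E lab n x y" for x y :: "'x list"
    using that unfolding confusable_def by metis
  have deg: "card {y \<in> ?U. confusable E lab n x y} \<le> ?D" if "x \<in> ?U" for x
    using card_confusable_le[of x n E lab m] that m by simp
  obtain F where F: "F \<subseteq> ?U" "pairwise (\<lambda>x y. \<not> confusable E lab n x y) F" "card ?U \<le> ?D * card F"
    using exists_large_independent_subset[OF finite_lists_of_length sym refl deg] by blast
  from F(3) have "F \<noteq> {}" by (auto simp: card_lists_of_length)
  with F show ?thesis
    by (auto simp: zero_error_code_iff_pairwise card_lists_of_length mult.commute)
qed

lemma admissible_words_erasures_le: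
  fixes E :: "('s::finite \<times> 's) set"
  assumes "fsec E lab" "v \<in> admissible_words E lab n"
  shows "length (filter id v) \<le> nat \<lfloor>max_ratio E lab * real n + CARD('s)\<rfloor>"
  using assms admissible_erasures_le[OF assms(1)]
  by (intro le_nat_floor) (auto simp: admissible_words_def noise_words_def)

section \<open>Growth of the number of admissible noise words\<close>

lemma pow_mat_Suc_left:
  assumes "(A :: 'a::semiring_1 mat) \<in> carrier_mat n n"
  shows "A ^\<^sub>m Suc k = A * A ^\<^sub>m k"
proof (induction k)
  case (Suc k)
  have "A ^\<^sub>m Suc (Suc k) = (A * A ^\<^sub>m k) * A" using Suc by simp
  also have "\<dots> = A * (A ^\<^sub>m k * A)" using assms by (intro assoc_mult_mat[of _ n n _ n]) auto
  finally show ?case by simp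
qed (use assms in simp)

lemma smult_pow_mat:
  assumes "(A :: 'a::comm_ring_1 mat) \<in> carrier_mat n n"
  shows "(c \<cdot>\<^sub>m A) ^\<^sub>m k = c ^ k \<cdot>\<^sub>m A ^\<^sub>m k"
proof (induction k)
  case (Suc k)
  have "(c \<cdot>\<^sub>m A) ^\<^sub>m Suc k = c ^ k \<cdot>\<^sub>m (A ^\<^sub>m k * (c \<cdot>\<^sub>m A))"
    using Suc assms by (simp add: mult_smult_assoc_mat[of _ n n _ n])
  also have "\<dots> = c ^ Suc k \<cdot>\<^sub>m A ^\<^sub>m Suc k"
    using assms by (auto simp: mult_smult_distrib[of _ n n _ n] intro!: eq_matI)
  finally show ?case .
qed (use assms in \<open>auto intro!: eq_matI\<close>)

lemma eigenvalue_smult_mat: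
  fixes A :: "'a::field mat"
  assumes A: "A \<in> carrier_mat n n" and "c \<noteq> 0" and "eigenvalue (c \<cdot>\<^sub>m A) z"
  shows "eigenvalue A (z / c)"
proof -
  obtain v where v: "v \<in> carrier_vec n" "v \<noteq> 0\<^sub>v n" "(c \<cdot>\<^sub>m A) *\<^sub>v v = z \<cdot>\<^sub>v v"
    using assms(3) A unfolding eigenvalue_def eigenvector_def by auto
  have "A *\<^sub>v v = (z / c) \<cdot>\<^sub>v v"
  proof (rule eq_vecI)
    fix i assume "i < dim_vec ((z / c) \<cdot>\<^sub>v v)"
    then have i: "i < n" using v(1) by simp
    have "c * (A *\<^sub>v v) $ i = z * v $ i"
      using arg_cong[OF v(3), of "\<lambda>w. w $ i"] i A v(1)
      by (simp add: scalar_prod_def sum_distrib_left mult.assoc)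
    then show "(A *\<^sub>v v) $ i = ((z / c) \<cdot>\<^sub>v v) $ i"
      using i v(1) \<open>c \<noteq> 0\<close> by (simp add: field_simps)
  qed (use A v in simp)
  with A v show ?thesis unfolding eigenvalue_def eigenvector_def by auto
qed

text \<open>Scaled by \<open>1 / \<mu>\<close>, the matrix has spectral radius below \<open>1\<close> and hence bounded powers.\<close>

lemma real_mat_pow_entries_le:
  fixes A :: "real mat"
  assumes A: "A \<in> carrier_mat N N" and N: "0 < N"
    and \<mu>: "spectral_radius (map_mat complex_of_real A) < \<mu>"
  shows "\<exists>c. \<forall>k i j. i < N \<longrightarrow> j < N \<longrightarrow> \<bar>(A ^\<^sub>m k) $$ (i, j)\<bar> \<le> c * \<mu> ^ k"
proof -
  define Ac where "Ac = map_mat complex_of_real A"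
  have Ac: "Ac \<in> carrier_mat N N" using A by (simp add: Ac_def)
  have "0 \<le> spectral_radius Ac"
    using spectral_radius_mem_max(1)[OF Ac N] by auto
  with \<mu> have \<mu>0: "0 < \<mu>" by (simp add: Ac_def)
  define B where "B = complex_of_real (1 / \<mu>) \<cdot>\<^sub>m Ac"
  have B: "B \<in> carrier_mat N N" using Ac by (simp add: B_def)
  have "cmod z < 1" if "eigenvalue B z" for z
  proof -
    have "eigenvalue Ac (z * complex_of_real \<mu>)"
      using eigenvalue_smult_mat[OF Ac _ that[unfolded B_def]] \<mu>0 by simp
    then have "cmod (z * complex_of_real \<mu>) \<le> spectral_radius Ac"
      using spectral_radius_mem_max(2)[OF Ac N] by (auto simp: spectrum_def)
    with \<mu>0 have "cmod z * \<mu> \<le> spectral_radius Ac" by (simp add: norm_mult)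
    with \<mu> have "cmod z * \<mu> < \<mu>" unfolding Ac_def by linarith
    with \<mu>0 show ?thesis by (simp add: mult_less_cancel_right2)
  qed
  then have "spectral_radius B < 1"
    using spectral_radius_mem_max(1)[OF B N] by (auto simp: spectrum_def)
  then obtain c where c: "norm_bound (B ^\<^sub>m k) c" for k
    using spectral_radius_jnf_norm_bound_less_1_upper_triangular[OF B] by blast
  have "\<bar>(A ^\<^sub>m k) $$ (i, j)\<bar> \<le> c * \<mu> ^ k" if "i < N" "j < N" for i j k
  proof -
    have "B ^\<^sub>m k = complex_of_real (1 / \<mu>) ^ k \<cdot>\<^sub>m Ac ^\<^sub>m k"
      unfolding B_def by (rule smult_pow_mat[OF Ac])
    also have "Ac ^\<^sub>m k = map_mat complex_of_real (A ^\<^sub>m k)"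
      unfolding Ac_def by (rule of_real_hom.mat_hom_pow[OF A, symmetric])
    finally have "B ^\<^sub>m k = complex_of_real (1 / \<mu>) ^ k \<cdot>\<^sub>m map_mat complex_of_real (A ^\<^sub>m k)" .
    then have "(1 / \<mu>) ^ k * \<bar>(A ^\<^sub>m k) $$ (i, j)\<bar> \<le> c"
      using c[of k] that A \<mu>0 by (auto simp: norm_bound_def norm_mult norm_power norm_divide)
    with \<mu>0 show ?thesis by (simp add: field_simps)
  qed
  then show ?thesis by blast
qed

lemma eigenvalue_reindex_iff:
  fixes A :: "'a::comm_ring_1 ^ 'n::finite ^ 'n"
  assumes f: "bij_betw f {..<N} (UNIV :: 'n set)"
  shows "eigenvalue (mat N N (\<lambda>(i, j). A $ f i $ f j)) z \<longleftrightarrow> (\<exists>v. v \<noteq> 0 \<and> A *v v = z *s v)"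
proof -
  define g where "g = inv_into {..<N} f"
  have g: "g s < N" "f (g s) = s" for s
    using f bij_betw_inv_into_right[OF f] bij_betwE[OF bij_betw_inv_into[OF f]]
    by (auto simp: g_def)
  have gf: "g (f i) = i" if "i < N" for i
    using f that by (auto simp: g_def bij_betw_def)
  let ?M = "mat N N (\<lambda>(i, j). A $ f i $ f j)"
  have row: "(A *v v) $ f i = (?M *\<^sub>v vec N (\<lambda>j. v $ f j)) $ i" if "i < N" for v i
    using that sum.reindex_bij_betw[OF f, of "\<lambda>s. A $ f i $ s * v $ s"]
    by (simp add: matrix_vector_mult_def scalar_prod_def lessThan_atLeast0)
  show ?thesis
  proof
    assume "eigenvalue ?M z"
    then obtain w where w: "w \<in> carrier_vec N" "w \<noteq> 0\<^sub>v N" "?M *\<^sub>v w = z \<cdot>\<^sub>v w"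
      unfolding eigenvalue_def eigenvector_def by auto
    define v where "v = (\<chi> s. w $ g s)"
    have w_eq: "w = vec N (\<lambda>j. v $ f j)" using w(1) gf by (auto simp: v_def)
    have "A *v v = z *s v"
    proof (rule Finite_Cartesian_Product.vec_eq_iff[THEN iffD2], rule allI)
      fix s
      have "(A *v v) $ s = (?M *\<^sub>v w) $ g s"
        using row[OF g(1)[of s], of v] by (simp add: g(2) w_eq[symmetric])
      also have "\<dots> = (z *s v) $ s"
        using w(3) w(1) g by (simp add: v_def)
      finally show "(A *v v) $ s = (z *s v) $ s" .
    qed
    moreover have "v \<noteq> 0"
    proof
      assume "v = 0"
      then have "w $ i = 0" if "i < N" for i
        using gf[OF that] by (metis v_def vec_lambda_beta zero_index)
      with w(1,2) show False by (auto simp: Matrix.vec_eq_iff)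
    qed
    ultimately show "\<exists>v. v \<noteq> 0 \<and> A *v v = z *s v" by blast
  next
    assume "\<exists>v. v \<noteq> 0 \<and> A *v v = z *s v"
    then obtain v where v: "v \<noteq> 0" "A *v v = z *s v" by blast
    define w where "w = vec N (\<lambda>j. v $ f j)"
    have "?M *\<^sub>v w = z \<cdot>\<^sub>v w"
    proof (rule eq_vecI)
      fix i assume "i < dim_vec (z \<cdot>\<^sub>v w)"
      then have i: "i < N" by (simp add: w_def)
      have "(?M *\<^sub>v w) $ i = (A *v v) $ f i" using row[OF i, of v] by (simp add: w_def)
      also have "\<dots> = (z \<cdot>\<^sub>v w) $ i" using v(2) i by (simp add: w_def)
      finally show "(?M *\<^sub>v w) $ i = (z \<cdot>\<^sub>v w) $ i" .
    qed (simp add: w_def)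
    moreover have "w \<noteq> 0\<^sub>v N"
    proof
      assume "w = 0\<^sub>v N"
      then have "v $ s = 0" for s
        using g[of s] by (metis w_def index_vec index_zero_vec(1))
      with v(1) show False by (simp add: Finite_Cartesian_Product.vec_eq_iff)
    qed
    ultimately show "eigenvalue ?M z"
      unfolding eigenvalue_def eigenvector_def by (intro exI[of _ w]) (simp add: w_def)
  qed
qed

text \<open>Matrices of \<open>Jordan_Normal_Form\<close> are indexed by naturals; \<open>f\<close> enumerates the states.\<close>

definition adjacency_mat :: "(nat \<Rightarrow> 's) \<Rightarrow> nat \<Rightarrow> ('s \<times> 's) set \<Rightarrow> real mat" where
  "adjacency_mat f N E = mat N N (\<lambda>(i, j). if (f i, f j) \<in> E then 1 else 0)"

lemma adjacency_mat_carrier [simp]: "adjacency_mat f N E \<in> carrier_mat N N"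
  and adjacency_mat_dim [simp]: "dim_row (adjacency_mat f N E) = N" "dim_col (adjacency_mat f N E) = N"
  by (simp_all add: adjacency_mat_def)

lemma perron_eigenvalue_eq_spectral_radius:
  fixes E :: "('s::finite \<times> 's) set"
  assumes f: "bij_betw f {..<N} (UNIV :: 's set)"
  shows "perron_eigenvalue (adj_matrix E) = spectral_radius (map_mat complex_of_real (adjacency_mat f N E))"
proof -
  define A where "A = (\<chi> i j. complex_of_real (adj_matrix E $ i $ j))"
  have "map_mat complex_of_real (adjacency_mat f N E) = mat N N (\<lambda>(i, j). A $ f i $ f j)"
    by (auto simp: adjacency_mat_def adj_matrix_def A_def intro!: eq_matI)
  then have "spectrum (map_mat complex_of_real (adjacency_mat f N E)) = {z. \<exists>v. v \<noteq> 0 \<and> A *v v = z *s v}"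
    unfolding spectrum_def using eigenvalue_reindex_iff[OF f, of A] by auto
  then show ?thesis
    unfolding perron_eigenvalue_def spectral_radius_def A_def[symmetric] by (simp add: image_Collect)
qed

lemma card_noise_words_le_row_sum:
  fixes E :: "('s::finite \<times> 's) set"
  assumes f: "bij_betw f {..<N} (UNIV :: 's set)"
  shows "i < N \<Longrightarrow> real (card (noise_words E lab n (f i))) \<le> (\<Sum>k<N. (adjacency_mat f N E ^\<^sub>m n) $$ (i, k))"
proof (induction n arbitrary: i)
  case 0
  then have "(\<Sum>k<N. (adjacency_mat f N E ^\<^sub>m 0) $$ (i, k)) = (\<Sum>k<N. if i = k then 1 else 0)"
    by (intro sum.cong) (auto simp: adjacency_mat_def)
  with 0 show ?case by simp
next
  case (Suc n)
  let ?M = "adjacency_mat f N E" and ?c = "\<lambda>s. real (card (noise_words E lab n s))"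
  have "real (card (noise_words E lab (Suc n) (f i))) \<le> (\<Sum>s \<in> {s. (f i, s) \<in> E}. ?c s)"
    using card_noise_words_Suc_le[of E lab n "f i"] by (simp flip: of_nat_sum)
  also have "\<dots> = (\<Sum>s \<in> UNIV. if (f i, s) \<in> E then ?c s else 0)"
    using sum.inter_filter[of UNIV ?c "\<lambda>s. (f i, s) \<in> E"] by simp
  also have "\<dots> = (\<Sum>j<N. if (f i, f j) \<in> E then ?c (f j) else 0)"
    using sum.reindex_bij_betw[OF f, of "\<lambda>s. if (f i, s) \<in> E then ?c s else 0"] by simp
  also have "\<dots> = (\<Sum>j<N. ?M $$ (i, j) * ?c (f j))"
    using Suc.prems by (intro sum.cong) (auto simp: adjacency_mat_def)
  also have "\<dots> \<le> (\<Sum>j<N. ?M $$ (i, j) * (\<Sum>k<N. (?M ^\<^sub>m n) $$ (j, k)))"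
    using Suc by (intro sum_mono mult_left_mono) (auto simp: adjacency_mat_def)
  also have "\<dots> = (\<Sum>k<N. \<Sum>j<N. ?M $$ (i, j) * (?M ^\<^sub>m n) $$ (j, k))"
    unfolding sum_distrib_left by (rule sum.swap)
  also have "\<dots> = (\<Sum>k<N. (?M ^\<^sub>m Suc n) $$ (i, k))"
    unfolding pow_mat_Suc_left[OF adjacency_mat_carrier] using Suc.prems
    by (intro sum.cong) (auto simp: scalar_prod_def lessThan_atLeast0)
  finally show ?case .
qed

lemma noise_words_growth:
  fixes E :: "('s::finite \<times> 's) set"
  assumes "perron_eigenvalue (adj_matrix E) < \<mu>"
  shows "\<exists>K. \<forall>n s. real (card (noise_words E lab n s)) \<le> K * \<mu> ^ n"
proof -
  let ?N = "CARD('s)"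
  obtain f where f: "bij_betw f {..<?N} (UNIV :: 's set)"
    using ex_bij_betw_nat_finite[of "UNIV :: 's set"] by (auto simp: lessThan_atLeast0)
  obtain c where c: "\<forall>k i j. i < ?N \<longrightarrow> j < ?N \<longrightarrow> \<bar>(adjacency_mat f ?N E ^\<^sub>m k) $$ (i, j)\<bar> \<le> c * \<mu> ^ k"
    using real_mat_pow_entries_le[of "adjacency_mat f ?N E" ?N \<mu>] assms
    by (auto simp: perron_eigenvalue_eq_spectral_radius[OF f])
  have "real (card (noise_words E lab n s)) \<le> (?N * c) * \<mu> ^ n" for n s
  proof -
    obtain i where i: "i < ?N" "s = f i" using f by (auto simp: bij_betw_def)
    have "real (card (noise_words E lab n s)) \<le> (\<Sum>k<?N. (adjacency_mat f ?N E ^\<^sub>m n) $$ (i, k))"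
      using card_noise_words_le_row_sum[OF f i(1)] i(2) by simp
    also have "\<dots> \<le> (\<Sum>k<?N. c * \<mu> ^ n)"
      using c i(1) by (intro sum_mono) (meson abs_le_D1 lessThan_iff)
    finally show ?thesis by simp
  qed
  then show ?thesis by blast
qed

text \<open>Every state has admissible noise words of every length, so they cannot die out.\<close>

lemma perron_eigenvalue_ge_1:
  fixes E :: "('s::finite \<times> 's) set"
  assumes fs: "fsec E lab"
  shows "1 \<le> perron_eigenvalue (adj_matrix E)"
proof (rule ccontr)
  define \<mu> where "\<mu> = (max (perron_eigenvalue (adj_matrix E)) 0 + 1) / 2"
  assume "\<not> 1 \<le> perron_eigenvalue (adj_matrix E)"
  then have \<mu>: "perron_eigenvalue (adj_matrix E) < \<mu>" "0 < \<mu>" "\<mu> < 1"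
    unfolding \<mu>_def by auto
  obtain K where K: "\<forall>n s. real (card (noise_words E lab n s)) \<le> K * \<mu> ^ n"
    using noise_words_growth[OF \<mu>(1)] by blast
  fix s :: 's
  have "1 \<le> K * \<mu> ^ n" for n
  proof -
    obtain v where "length v = n" "admissible_from E lab s v"
      using fsec_admissible_exists[OF fs] by blast
    then have "noise_words E lab n s \<noteq> {}" by (auto simp: noise_words_def)
    then have "1 \<le> card (noise_words E lab n s)"
      using finite_noise_words by (simp add: Suc_le_eq card_gt_0_iff)
    with K show ?thesis by (metis of_nat_1 of_nat_le_iff order_trans)
  qed
  moreover from this[of 0] have "0 < K" by simp
  moreover obtain n where "\<mu> ^ n < 1 / K"
    using real_arch_pow_inv[of "1 / K" \<mu>] \<open>0 < K\<close> \<mu> by auto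
  ultimately show False by (simp add: field_simps) (metis not_le)
qed

lemma admissible_words_growth:
  fixes E :: "('s::finite \<times> 's) set"
  assumes "perron_eigenvalue (adj_matrix E) < \<mu>"
  shows "\<exists>K. \<forall>n. real (card (admissible_words E lab n)) \<le> K * \<mu> ^ n"
proof -
  obtain K where K: "\<forall>n s. real (card (noise_words E lab n s)) \<le> K * \<mu> ^ n"
    using noise_words_growth[OF assms] by blast
  have "real (card (admissible_words E lab n)) \<le> (CARD('s) * K) * \<mu> ^ n" for n
  proof -
    have "real (card (admissible_words E lab n)) \<le> (\<Sum>s \<in> UNIV. real (card (noise_words E lab n s)))"
      unfolding admissible_words_def using card_UN_le[of "UNIV :: 's set" "noise_words E lab n"]
      by (simp flip: of_nat_sum)
    also have "\<dots> \<le> (\<Sum>s \<in> (UNIV :: 's set). K * \<mu> ^ n)" using K by (intro sum_mono) auto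
    finally show ?thesis by simp
  qed
  then show ?thesis by blast
qed

section \<open>The lower bound\<close>

lemma card_admissible_words_pos:
  assumes "fsec E lab" shows "0 < card (admissible_words E lab n)"
proof -
  obtain s v where "length v = n" "admissible_from E lab s v"
    using fsec_admissible_exists[OF assms] by blast
  then have "v \<in> admissible_words E lab n" by (auto simp: admissible_words_def noise_words_def)
  then show ?thesis by (metis card_gt_0_iff empty_iff finite_admissible_words)
qed

lemma zero_error_code_log_card_ge:
  fixes E :: "('s::finite \<times> 's) set"
  assumes fs: "fsec E lab" and q: "CARD('x::finite) \<ge> 2"
  shows "\<exists>F :: 'x list set. F \<noteq> {} \<and> zero_error_code E lab n F \<and>
    real n * (1 - max_ratio E lab) - CARD('s) - log CARD('x) (card (admissible_words E lab n))
      \<le> log CARD('x) (card F)"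
proof -
  let ?q = "real CARD('x)" and ?V = "card (admissible_words E lab n)"
  define m where "m = nat \<lfloor>max_ratio E lab * real n + CARD('s)\<rfloor>"
  obtain F :: "'x list set" where F: "F \<noteq> {}" "zero_error_code E lab n F"
    "CARD('x) ^ n \<le> card F * (?V * CARD('x) ^ m)"
    using zero_error_code_exists[OF fs admissible_words_erasures_le[OF fs]] unfolding m_def by blast
  have F0: "0 < card F" by (rule card_zero_error_code_pos[OF F(2,1)])
  have V0: "0 < ?V" by (rule card_admissible_words_pos[OF fs])
  have q1: "1 < ?q" using q by simp
  have "real n = log ?q (?q ^ n)" using q1 by (simp add: log_nat_power)
  also have "\<dots> \<le> log ?q (real (card F) * (real ?V * ?q ^ m))"
    using F(3) F0 V0 q1 by (intro log_mono) (simp_all flip: of_nat_mult of_nat_power)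
  also have "\<dots> = log ?q (card F) + log ?q ?V + real m"
    using F0 V0 q1 by (simp add: log_mult log_nat_power)
  also have "real m \<le> max_ratio E lab * real n + CARD('s)"
    using max_ratio_nonneg[OF fs] by (simp add: m_def)
  finally show ?thesis using F(1,2) by (auto simp: algebra_simps)
qed

lemma zero_error_rate_approaches:
  fixes E :: "('s::finite \<times> 's) set"
  assumes fs: "fsec E lab" and q: "CARD('x::finite) \<ge> 2" and \<epsilon>: "0 < \<epsilon>"
  shows "\<exists>n (F :: 'x list set). n \<ge> 1 \<and> F \<noteq> {} \<and> zero_error_code E lab n F \<and>
    1 - max_ratio E lab - topological_entropy E TYPE('x) - 2 * \<epsilon> \<le> log CARD('x) (card F) / n"
proof -
  let ?q = "real CARD('x)" and ?\<rho> = "perron_eigenvalue (adj_matrix E)"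
  let ?h = "topological_entropy E TYPE('x)"
  have q1: "1 < ?q" using q by simp
  have \<rho>1: "1 \<le> ?\<rho>" by (rule perron_eigenvalue_ge_1[OF fs])
  define \<mu> where "\<mu> = ?\<rho> * ?q powr \<epsilon>"
  have "?\<rho> < \<mu>" using \<rho>1 q1 \<epsilon> by (simp add: \<mu>_def gr_one_powr)
  then obtain K where K: "\<And>n. real (card (admissible_words E lab n)) \<le> K * \<mu> ^ n"
    using admissible_words_growth by blast
  have \<mu>0: "0 < \<mu>" using \<rho>1 by (simp add: \<mu>_def)
  have log_\<mu>: "log ?q \<mu> = ?h + \<epsilon>"
    using \<rho>1 q1 by (simp add: \<mu>_def topological_entropy_def log_mult log_powr)
  have K0: "0 < K"
    using K[of 0] card_admissible_words_pos[OF fs, of 0] by (simp add: zero_less_mult_iff)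
  define c where "c = CARD('s) + log ?q K"
  define n where "n = nat \<lceil>c / \<epsilon>\<rceil> + 1"
  have "c / \<epsilon> \<le> real n" unfolding n_def by linarith
  with \<epsilon> have n: "n \<ge> 1" "c \<le> \<epsilon> * real n" by (simp_all add: n_def field_simps)
  obtain F :: "'x list set" where F: "F \<noteq> {}" "zero_error_code E lab n F"
    "real n * (1 - max_ratio E lab) - CARD('s) - log ?q (card (admissible_words E lab n))
       \<le> log ?q (card F)"
    using zero_error_code_log_card_ge[OF fs q] by blast
  have "log ?q (card (admissible_words E lab n)) \<le> log ?q (K * \<mu> ^ n)"
    using K[of n] card_admissible_words_pos[OF fs, of n] q1 by (intro log_mono) simp_all
  also have "\<dots> = log ?q K + real n * (?h + \<epsilon>)"
    using K0 \<mu>0 q1 by (simp add: log_mult log_nat_power log_\<mu>)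
  finally have "real n * (1 - max_ratio E lab - ?h - 2 * \<epsilon>) \<le> log ?q (card F)"
    using F(3) n(2) by (simp add: c_def algebra_simps)
  with n(1) F(1,2) show ?thesis
    by (intro exI[of _ n] exI[of _ F]) (simp add: pos_le_divide_eq mult.commute)
qed

lemma zero_error_code_singleton: "zero_error_code E lab 1 {[x]}"
  by (simp add: zero_error_code_def)

definition zero_error_rates :: "('s \<times> 's) set \<Rightarrow> ('s \<times> 's \<Rightarrow> bool) \<Rightarrow> 'x::finite itself \<Rightarrow> real set" where
  "zero_error_rates E lab _ = {log (real CARD('x)) (real (card F)) / real n | n (F :: 'x list set).
     n \<ge> 1 \<and> F \<noteq> {} \<and> zero_error_code E lab n F}"

lemma zero_error_capacity_eq_Sup: "zero_error_capacity E lab X = Sup (zero_error_rates E lab X)"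
  unfolding zero_error_capacity_def zero_error_rates_def ..

lemma zero_error_rates_nonempty: "zero_error_rates E lab TYPE('x::finite) \<noteq> {}"
proof -
  have "log CARD('x) (card {[undefined :: 'x]}) / real (1 :: nat) \<in> zero_error_rates E lab TYPE('x)"
    unfolding zero_error_rates_def using zero_error_code_singleton[of E lab "undefined :: 'x"] by blast
  then show ?thesis by blast
qed

lemma zero_error_capacity_le:
  assumes "\<And>n F. n \<ge> 1 \<Longrightarrow> F \<noteq> {} \<Longrightarrow> zero_error_code E lab n (F :: 'x::finite list set) \<Longrightarrow>
    log CARD('x) (card F) / n \<le> c"
  shows "zero_error_capacity E lab TYPE('x) \<le> c"
  unfolding zero_error_capacity_eq_Sup
proof (rule cSup_least[OF zero_error_rates_nonempty])
  fix r assume "r \<in> zero_error_rates E lab TYPE('x)"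
  then show "r \<le> c" unfolding zero_error_rates_def using assms by blast
qed

lemma zero_error_rate_le_capacity:
  assumes "\<And>n F. n \<ge> 1 \<Longrightarrow> F \<noteq> {} \<Longrightarrow> zero_error_code E lab n (F :: 'x::finite list set) \<Longrightarrow>
    log CARD('x) (card F) / n \<le> c"
    and "n \<ge> 1" "F \<noteq> {}" "zero_error_code E lab n (F :: 'x::finite list set)"
  shows "log CARD('x) (card F) / n \<le> zero_error_capacity E lab TYPE('x)"
  unfolding zero_error_capacity_eq_Sup
proof (rule cSup_upper)
  show "log CARD('x) (card F) / n \<in> zero_error_rates E lab TYPE('x)"
    unfolding zero_error_rates_def using assms(2-4) by (intro CollectI exI[of _ n] exI[of _ F]) simp
  show "bdd_above (zero_error_rates E lab TYPE('x))"
    unfolding zero_error_rates_def using assms(1) by (intro bdd_aboveI) auto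
qed

theorem theorem4:
  fixes E :: "('s::finite \<times> 's) set" and lab :: "'s \<times> 's \<Rightarrow> bool"
  assumes "CARD('x::finite) \<ge> 2"
    and "fsec E lab"
  shows "1 - max_ratio E lab - topological_entropy E TYPE('x)
           \<le> zero_error_capacity E lab TYPE('x)
       \<and> zero_error_capacity E lab TYPE('x) \<le> 1 - max_ratio E lab"
proof
  note rate_le = zero_error_rate_le[OF assms(2,1)]
  show "zero_error_capacity E lab TYPE('x) \<le> 1 - max_ratio E lab"
    by (rule zero_error_capacity_le[OF rate_le])
  show "1 - max_ratio E lab - topological_entropy E TYPE('x) \<le> zero_error_capacity E lab TYPE('x)"
  proof (rule field_le_epsilon)
    fix \<epsilon> :: real assume "0 < \<epsilon>"
    then obtain n and F :: "'x list set" where code: "n \<ge> 1" "F \<noteq> {}" "zero_error_code E lab n F"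
      and rate: "1 - max_ratio E lab - topological_entropy E TYPE('x) - 2 * (\<epsilon> / 2)
        \<le> log CARD('x) (card F) / n"
      using zero_error_rate_approaches[OF assms(2,1), of "\<epsilon> / 2"] by auto
    have "log CARD('x) (card F) / n \<le> zero_error_capacity E lab TYPE('x)"
      by (rule zero_error_rate_le_capacity[OF rate_le code])
    with rate show "1 - max_ratio E lab - topological_entropy E TYPE('x)
        \<le> zero_error_capacity E lab TYPE('x) + \<epsilon>"
      by simp
  qed
qed

end
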